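(* Let $B$ be a Borel ideal of $S=k[x_1,\dots,x_n]$ and let $m$ be a monomial with $\max(m)=p$. If $m\in\mathrm{Bgens}(B)$ and $\deg m\ge\deg m'$ for all $m'\in\mathrm{Bgens}(B)$, then $\frac{m}{x_p}$ is a $p$-socle for $B$.
   Context: For a monomial $m=x_{i_1}\cdots x_{i_d}$ with $i_1\le\dots\le i_d$, $\max(m)=i_d$. A Borel ideal is a monomial ideal closed under Borel moves $m\mapsto m\frac{x_{i_1}}{x_{j_1}}\cdots\frac{x_{i_s}}{x_{j_s}}$ ($i_t<j_t$, all $x_{j_t}\mid m$); $\mathrm{Bgens}(B)$ is the unique minimal set $T$ of monomials such that $B$ is the smallest Borel ideal containing $T$. A monomial $\nu$ is a $p$-socle for $B$ if $(B:\nu)=(x_1,\dots,x_p)$. *)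

theory Defs
  imports Main "HOL-Library.Multiset"
begin

text \<open>Monomials of S = k[x_1,...,x_n] are represented by multisets of variable
indices: the monomial x_{i_1}...x_{i_d} is the multiset {#i_1,...,i_d#}.
Multiplication is multiset sum, divisibility is sub-multiset, degree is size.\<close>

type_synonym monomial = "nat multiset"

definition monomials :: "nat \<Rightarrow> monomial set" where
  "monomials n = {m. set_mset m \<subseteq> {1..n}}"

definition mdeg :: "monomial \<Rightarrow> nat" where
  "mdeg m = size m"

definition mmax :: "monomial \<Rightarrow> nat" where
  "mmax m = Max (set_mset m)"

definition monomial_ideal :: "nat \<Rightarrow> monomial set \<Rightarrow> bool" where
  "monomial_ideal n B \<longleftrightarrow> B \<subseteq> monomials n \<and> (\<forall>u\<in>B. \<forall>v\<in>monomials n. u + v \<in> B)"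

text \<open>Borel move: m \<mapsto> m * x_{i_1}/x_{j_1} * ... * x_{i_s}/x_{j_s}, i_t < j_t,
with x_{j_1}...x_{j_s} dividing m.\<close>
definition borel_move :: "monomial \<Rightarrow> monomial \<Rightarrow> bool" where
  "borel_move m m' \<longleftrightarrow> (\<exists>ps :: (nat \<times> nat) list.
      (\<forall>(i, j)\<in>set ps. 1 \<le> i \<and> i < j) \<and>
      mset (map snd ps) \<subseteq># m \<and>
      m' = m - mset (map snd ps) + mset (map fst ps))"

definition borel_ideal :: "nat \<Rightarrow> monomial set \<Rightarrow> bool" where
  "borel_ideal n B \<longleftrightarrow> monomial_ideal n B \<and>
     (\<forall>m\<in>B. \<forall>m'. borel_move m m' \<longrightarrow> m' \<in> B)"

definition borel_gen :: "nat \<Rightarrow> monomial set \<Rightarrow> monomial set" where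
  "borel_gen n T = \<Inter> {B. borel_ideal n B \<and> T \<subseteq> B}"

text \<open>T is a minimal set of monomials whose Borel closure is B (this set is
unique and is Bgens(B)).\<close>
definition is_Bgens :: "nat \<Rightarrow> monomial set \<Rightarrow> monomial set \<Rightarrow> bool" where
  "is_Bgens n B T \<longleftrightarrow> T \<subseteq> monomials n \<and> borel_gen n T = B \<and>
     (\<forall>T'. T' \<subset> T \<longrightarrow> borel_gen n T' \<noteq> B)"

definition colon :: "nat \<Rightarrow> monomial set \<Rightarrow> monomial \<Rightarrow> monomial set" where
  "colon n B \<nu> = {u \<in> monomials n. u + \<nu> \<in> B}"

definition var_ideal :: "nat \<Rightarrow> nat \<Rightarrow> monomial set" where
  "var_ideal n p = {u \<in> monomials n. \<exists>i\<in>set_mset u. i \<le> p}"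

definition is_socle :: "nat \<Rightarrow> monomial set \<Rightarrow> monomial \<Rightarrow> nat \<Rightarrow> bool" where
  "is_socle n B \<nu> p \<longleftrightarrow> \<nu> \<in> monomials n \<and> colon n B \<nu> = var_ideal n p"

end

theory Submission
  imports Defs
begin

(* Write m = x_p * nu.  The inclusion (x_1,...,x_p) <= (B : nu) is immediate:
   for i <= p the monomial x_i * nu arises from m by a single Borel move.  For the converse
   suppose u involves only variables above p and u * nu lies in B.  Every monomial of the
   Borel ideal generated by T is divisible by a Borel descendant g' of some generator g, so
   g' divides u * nu.  The part of g' coming from u can be shifted down by Borel moves into
   x_p * nu / gcd(g', nu), because deg g' = deg g <= deg m = deg nu + 1; hence a descendant
   of g divides m.  If g = m this is impossible (the descendants of m only involve variables
   <= p, so g' would divide nu, which has smaller degree); otherwise m would be generated by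
   the remaining generators, contradicting the minimality of T. *)

section \<open>Elementary Borel steps\<close>

text \<open>A single elementary Borel move: replace one variable x_j of the monomial by a
  smaller variable x_i.  Every Borel move is a finite sequence of these.\<close>
definition borel_step :: "monomial \<Rightarrow> monomial \<Rightarrow> bool" where
  "borel_step x y \<longleftrightarrow> (\<exists>i j. 1 \<le> i \<and> i < j \<and> j \<in># x \<and> y = x - {#j#} + {#i#})"

lemma borel_move_steps_aux:
  assumes "\<forall>(i, j)\<in>set ps. 1 \<le> i \<and> i < j" and "mset (map snd ps) \<subseteq># x"
  shows "borel_step\<^sup>*\<^sup>* x (x - mset (map snd ps) + mset (map fst ps))"
  using assms
proof (induction ps arbitrary: x)
  case Nil
  then show ?case by simp
next
  case (Cons q ps)
  obtain i j where q: "q = (i, j)" by fastforce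
  let ?S = "mset (map snd ps)" and ?F = "mset (map fst ps)"
  have ij: "1 \<le> i" "i < j" using Cons.prems(1) q by auto
  have sub: "add_mset j ?S \<subseteq># x" using Cons.prems(2) q by simp
  then have j_in: "j \<in># x" by (meson mset_subset_eqD union_single_eq_member)
  define x1 where "x1 = x - {#j#} + {#i#}"
  have first: "borel_step x x1" unfolding borel_step_def x1_def using ij j_in by blast
  have S_rest: "?S \<subseteq># x - {#j#}"
    using sub j_in by (metis insert_subset_eq_iff)
  then have "?S \<subseteq># x1" unfolding x1_def by (auto simp: subseteq_mset_def le_SucI)
  then have rest: "borel_step\<^sup>*\<^sup>* x1 (x1 - ?S + ?F)"
    using Cons.IH Cons.prems(1) by auto
  have "x1 - ?S + ?F = (x - {#j#} - ?S) + {#i#} + ?F"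
    unfolding x1_def using S_rest by (simp only: subset_mset.diff_add_assoc2)
  also have "\<dots> = x - mset (map snd (q # ps)) + mset (map fst (q # ps))"
    by (simp add: q diff_diff_add)
  finally show ?case using first rest by (metis converse_rtranclp_into_rtranclp)
qed

lemma borel_move_steps: "borel_move x y \<Longrightarrow> borel_step\<^sup>*\<^sup>* x y"
  unfolding borel_move_def using borel_move_steps_aux by blast

lemma borel_step_move: "borel_step x y \<Longrightarrow> borel_move x y"
  unfolding borel_step_def borel_move_def
  by (elim exE conjE, rule_tac x = "[(i, j)]" in exI) auto

lemma borel_ideal_steps_closed:
  assumes "borel_ideal n B" and "borel_step\<^sup>*\<^sup>* x y" and "x \<in> B"
  shows "y \<in> B"
  using assms(2,3)
  by (induction rule: rtranclp_induct)
     (use assms(1) borel_step_move in \<open>auto simp: borel_ideal_def\<close>)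

lemma borel_step_monomials: "borel_step x y \<Longrightarrow> x \<in> monomials n \<Longrightarrow> y \<in> monomials n"
  unfolding borel_step_def monomials_def by (fastforce dest!: in_diffD)

lemma borel_steps_size: "borel_step\<^sup>*\<^sup>* x y \<Longrightarrow> size y = size x"
proof (induction rule: rtranclp_induct)
  case (step y z)
  then obtain i j where j: "j \<in># y" and z: "z = y - {#j#} + {#i#}"
    unfolding borel_step_def by blast
  have "size y = Suc (size (y - {#j#}))" using j by (metis insert_DiffM size_add_mset)
  then show ?case using step.IH z by simp
qed simp

lemma borel_steps_bounded:
  "borel_step\<^sup>*\<^sup>* x y \<Longrightarrow> \<forall>k\<in>#x. k \<le> p \<Longrightarrow> \<forall>k\<in>#y. k \<le> p"
proof (induction rule: rtranclp_induct)
  case (step y z)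
  then obtain i j where "i < j" "j \<in># y" "z = y - {#j#} + {#i#}"
    unfolding borel_step_def by blast
  then show ?case using step by (fastforce dest!: in_diffD)
qed simp

section \<open>The Borel ideal generated by a set of monomials\<close>

lemma monomial_ideal_multiple:
  assumes "monomial_ideal n I" "u \<in> I" "u \<subseteq># v" "v \<in> monomials n"
  shows "v \<in> I"
proof -
  have "v - u \<in> monomials n" using assms(4) unfolding monomials_def by (auto dest: in_diffD)
  then have "u + (v - u) \<in> I" using assms(1,2) unfolding monomial_ideal_def by blast
  then show ?thesis using assms(3) by (simp add: subset_mset.add_diff_inverse)
qed

definition borel_closure :: "nat \<Rightarrow> monomial set \<Rightarrow> monomial set" where
  "borel_closure n T =
     {v \<in> monomials n. \<exists>g\<in>T. \<exists>g'. borel_step\<^sup>*\<^sup>* g g' \<and> g' \<subseteq># v}"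

text \<open>The key closure property: if a descendant g' divides v and v makes an elementary step
  to w, then either g' still divides w or g' makes the same step and then divides w.\<close>
lemma borel_closure_step:
  assumes v: "v \<in> borel_closure n T" and step: "borel_step v w"
  shows "w \<in> borel_closure n T"
proof -
  obtain g g' where g: "g \<in> T" "borel_step\<^sup>*\<^sup>* g g'" "g' \<subseteq># v" and v_mon: "v \<in> monomials n"
    using v unfolding borel_closure_def by blast
  obtain i j where ij: "1 \<le> i" "i < j" "j \<in># v" and w: "w = v - {#j#} + {#i#}"
    using step unfolding borel_step_def by blast
  have w_mon: "w \<in> monomials n" using borel_step_monomials[OF step v_mon] .
  have g'_le: "count g' a \<le> count v a" for a using g(3) by (simp add: mset_subset_eq_count)
  show ?thesis
  proof (cases "count g' j < count v j")
    case True
    have "count g' a \<le> count w a" for a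
      using g'_le[of a] True unfolding w by (cases "a = j"; cases "a = i") auto
    then have "g' \<subseteq># w" by (simp add: subseteq_mset_def)
    then show ?thesis using g w_mon unfolding borel_closure_def by blast
  next
    case False
    then have "count g' j = count v j" using g'_le[of j] by simp
    then have "j \<in># g'" using ij(3) by (metis count_greater_zero_iff)
    then have "borel_step g' (g' - {#j#} + {#i#})" unfolding borel_step_def using ij by blast
    then have "borel_step\<^sup>*\<^sup>* g (g' - {#j#} + {#i#})" using g(2) by simp
    moreover have "g' - {#j#} + {#i#} \<subseteq># w"
      unfolding subseteq_mset_def w using g'_le by (simp add: diff_le_mono)
    ultimately show ?thesis using g(1) w_mon unfolding borel_closure_def by blast
  qed
qed

lemma borel_closure_is_borel:
  assumes "T \<subseteq> monomials n"
  shows "borel_ideal n (borel_closure n T)"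
proof -
  have "monomial_ideal n (borel_closure n T)"
    unfolding monomial_ideal_def
  proof (intro conjI ballI)
    show "borel_closure n T \<subseteq> monomials n" unfolding borel_closure_def by blast
  next
    fix u v assume u: "u \<in> borel_closure n T" and v: "v \<in> monomials n"
    then have "u + v \<in> monomials n" unfolding borel_closure_def monomials_def by auto
    moreover have "\<And>g'. g' \<subseteq># u \<Longrightarrow> g' \<subseteq># u + v" by (simp add: subset_mset.add_increasing2)
    ultimately show "u + v \<in> borel_closure n T" using u unfolding borel_closure_def by blast
  qed
  moreover have "borel_step\<^sup>*\<^sup>* v w \<Longrightarrow> v \<in> borel_closure n T \<Longrightarrow> w \<in> borel_closure n T" for v w
    by (induction rule: rtranclp_induct) (auto intro: borel_closure_step)
  ultimately show ?thesis unfolding borel_ideal_def using borel_move_steps by blast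
qed

lemma borel_closure_least:
  assumes "borel_ideal n I" "T \<subseteq> I"
  shows "borel_closure n T \<subseteq> I"
proof
  fix v assume "v \<in> borel_closure n T"
  then obtain g g' where "g \<in> T" "borel_step\<^sup>*\<^sup>* g g'" "g' \<subseteq># v" "v \<in> monomials n"
    unfolding borel_closure_def by blast
  then show "v \<in> I"
    using assms borel_ideal_steps_closed monomial_ideal_multiple
    unfolding borel_ideal_def by blast
qed

theorem borel_gen_eq_closure:
  assumes "T \<subseteq> monomials n"
  shows "borel_gen n T = borel_closure n T"
proof
  have "T \<subseteq> borel_closure n T" using assms unfolding borel_closure_def by blast
  then show "borel_gen n T \<subseteq> borel_closure n T"
    unfolding borel_gen_def using borel_closure_is_borel[OF assms] by blast
  show "borel_closure n T \<subseteq> borel_gen n T"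
    unfolding borel_gen_def using borel_closure_least by blast
qed

lemma borel_gen_remove_redundant:
  assumes "m \<in> borel_gen n (T - {m})"
  shows "borel_gen n (T - {m}) = borel_gen n T"
  using assms unfolding borel_gen_def by blast

lemma Bgens_irredundant:
  assumes "is_Bgens n B T" "m \<in> T"
  shows "m \<notin> borel_gen n (T - {m})"
proof
  assume "m \<in> borel_gen n (T - {m})"
  then have "borel_gen n (T - {m}) = B"
    using assms(1) borel_gen_remove_redundant unfolding is_Bgens_def by metis
  moreover have "T - {m} \<subset> T" using assms(2) by blast
  ultimately show False using assms(1) unfolding is_Bgens_def by blast
qed

section \<open>Shifting high variables down\<close>

lemma shift_down:
  assumes "\<forall>x\<in>#b. p < x" "\<forall>y\<in>#r. 1 \<le> y \<and> y \<le> p" "size b \<le> size r"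
  shows "\<exists>c. c \<subseteq># r \<and> borel_step\<^sup>*\<^sup>* (a + b) (a + c)"
  using assms
proof (induction b arbitrary: a r)
  case empty
  then show ?case by (rule_tac x = "{#}" in exI) simp
next
  case (add x b)
  then obtain y where y: "y \<in># r" by fastforce
  have first: "borel_step (a + add_mset x b) (add_mset y a + b)"
    unfolding borel_step_def using y add.prems
    by (rule_tac x = y in exI, rule_tac x = x in exI) force
  have "size b \<le> size (r - {#y#})" using add.prems(3) y by (simp add: size_Diff_singleton)
  moreover have "\<forall>z\<in>#r - {#y#}. 1 \<le> z \<and> z \<le> p" using add.prems(2) by (auto dest: in_diffD)
  ultimately obtain c where c: "c \<subseteq># r - {#y#}"
    and rest: "borel_step\<^sup>*\<^sup>* (add_mset y a + b) (add_mset y a + c)"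
    using add.IH[of "r - {#y#}" "add_mset y a"] add.prems(1) by auto
  have "add_mset y c \<subseteq># r" using c y by (metis insert_subset_eq_iff)
  moreover have "borel_step\<^sup>*\<^sup>* (a + add_mset x b) (a + add_mset y c)"
    using first rest by (simp add: converse_rtranclp_into_rtranclp)
  ultimately show ?case by blast
qed

lemma descendant_divides_shift:
  assumes g': "g' \<subseteq># u + \<nu>" and u: "\<forall>x\<in>#u. p < x"
    and \<nu>: "\<forall>y\<in>#\<nu>. 1 \<le> y \<and> y \<le> p" and p: "1 \<le> p"
    and deg: "size g' \<le> Suc (size \<nu>)"
  shows "\<exists>w. borel_step\<^sup>*\<^sup>* g' w \<and> w \<subseteq># add_mset p \<nu>"
proof -
  define a where "a = g' \<inter># \<nu>"
  define b where "b = g' - a"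
  have a_\<nu>: "a \<subseteq># \<nu>" and a_g': "a \<subseteq># g'" unfolding a_def by simp_all
  then have g'_ab: "g' = a + b" unfolding b_def by (simp only: subset_mset.add_diff_inverse)
  have "b \<subseteq># u" using g' unfolding b_def a_def subseteq_mset_def
    by (simp add: le_diff_conv add.commute)
  then have b_high: "\<forall>x\<in>#b. p < x" using u by (meson mset_subset_eqD)
  define r where "r = add_mset p (\<nu> - a)"
  have r_low: "\<forall>y\<in>#r. 1 \<le> y \<and> y \<le> p" unfolding r_def using \<nu> p by (auto dest: in_diffD)
  have "size r = Suc (size \<nu> - size a)" and "size a \<le> size \<nu>"
    unfolding r_def using a_\<nu> by (simp_all add: size_Diff_submset size_mset_mono)
  then have "size b \<le> size r" using deg g'_ab by simp
  then obtain c where c: "c \<subseteq># r" "borel_step\<^sup>*\<^sup>* (a + b) (a + c)"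
    using shift_down[OF b_high r_low] by blast
  have "a + c \<subseteq># a + r" using c(1) by simp
  also have "a + r = add_mset p \<nu>" unfolding r_def using a_\<nu> by simp
  finally show ?thesis using c(2) g'_ab by blast
qed

lemma low_divisor:
  fixes g' u \<nu> :: monomial
  assumes "g' \<subseteq># u + \<nu>" "\<forall>x\<in>#u. p < x" "\<forall>k\<in>#g'. k \<le> p"
  shows "g' \<subseteq># \<nu>"
  unfolding subseteq_mset_def
proof
  fix x
  show "count g' x \<le> count \<nu> x"
  proof (cases "x \<in># g'")
    case True
    then have "x \<le> p" using assms(3) by blast
    then have "count u x = 0" using assms(2) by (auto simp: not_in_iff[symmetric] not_less)
    moreover have "count g' x \<le> count u x + count \<nu> x"
      using assms(1) by (metis count_union subseteq_mset_def)
    ultimately show ?thesis by simp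
  qed (simp add: not_in_iff)
qed

lemma var_ideal_subset_colon:
  assumes B: "borel_ideal n B" and m: "add_mset p \<nu> \<in> B"
  shows "var_ideal n p \<subseteq> colon n B \<nu>"
proof
  fix u assume "u \<in> var_ideal n p"
  then obtain i where u: "u \<in> monomials n" "i \<in># u" "i \<le> p"
    unfolding var_ideal_def by blast
  have "1 \<le> i" using u unfolding monomials_def by auto
  have "borel_step\<^sup>*\<^sup>* (add_mset p \<nu>) (add_mset i \<nu>)"
  proof (cases "i = p")
    case False
    then have "borel_step (add_mset p \<nu>) (add_mset i \<nu>)"
      unfolding borel_step_def using \<open>1 \<le> i\<close> u(3)
      by (rule_tac x = i in exI, rule_tac x = p in exI) auto
    then show ?thesis by blast
  qed simp
  then have "add_mset i \<nu> \<in> B" using borel_ideal_steps_closed[OF B] m by blast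
  moreover have "add_mset i \<nu> \<subseteq># u + \<nu>"
  proof -
    obtain u' where "u = add_mset i u'" using u(2) by (metis multi_member_split)
    then show ?thesis by simp
  qed
  moreover have "u + \<nu> \<in> monomials n"
  proof -
    have "add_mset p \<nu> \<in> monomials n"
      using B m unfolding borel_ideal_def monomial_ideal_def by blast
    then show ?thesis using u(1) unfolding monomials_def by auto
  qed
  ultimately have "u + \<nu> \<in> B"
    using B monomial_ideal_multiple unfolding borel_ideal_def by blast
  then show "u \<in> colon n B \<nu>" using u(1) unfolding colon_def by blast
qed

lemma colon_subset_var_ideal:
  assumes gens: "is_Bgens n B T" and m: "add_mset p \<nu> \<in> T"
    and low: "\<forall>k\<in>#\<nu>. k \<le> p" and deg: "\<forall>g\<in>T. size g \<le> Suc (size \<nu>)"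
  shows "colon n B \<nu> \<subseteq> var_ideal n p"
proof
  fix u assume "u \<in> colon n B \<nu>"
  then have u: "u \<in> monomials n" "u + \<nu> \<in> B" unfolding colon_def by auto
  show "u \<in> var_ideal n p"
  proof (rule ccontr)
    assume "u \<notin> var_ideal n p"
    then have high: "\<forall>x\<in>#u. p < x" using u(1) unfolding var_ideal_def by (auto simp: not_le)
    have T_mon: "T \<subseteq> monomials n" and B_gen: "borel_gen n T = B"
      using gens unfolding is_Bgens_def by auto
    have m_mon: "add_mset p \<nu> \<in> monomials n" using m T_mon by blast
    then have \<nu>_range: "\<forall>y\<in>#\<nu>. 1 \<le> y \<and> y \<le> p" and p: "1 \<le> p"
      using low unfolding monomials_def by auto
    obtain g g' where g: "g \<in> T" "borel_step\<^sup>*\<^sup>* g g'" "g' \<subseteq># u + \<nu>"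
      using u(2) borel_gen_eq_closure[OF T_mon] B_gen unfolding borel_closure_def by blast
    have "g \<noteq> add_mset p \<nu>"
    proof
      assume "g = add_mset p \<nu>"
      then have "g' \<subseteq># \<nu>"
        using low_divisor[OF g(3) high] borel_steps_bounded[OF g(2)] low by simp
      then show False using borel_steps_size[OF g(2)] \<open>g = add_mset p \<nu>\<close>
        by (auto dest: size_mset_mono)
    qed
    moreover obtain w where "borel_step\<^sup>*\<^sup>* g' w" "w \<subseteq># add_mset p \<nu>"
      using descendant_divides_shift[OF g(3) high \<nu>_range p]
        borel_steps_size[OF g(2)] deg g(1) by auto
    ultimately have "add_mset p \<nu> \<in> borel_closure n (T - {add_mset p \<nu>})"
      using g m_mon unfolding borel_closure_def by (blast intro: rtranclp_trans)
    then show False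
      using Bgens_irredundant[OF gens m] borel_gen_eq_closure[of "T - {add_mset p \<nu>}" n] T_mon
      by blast
  qed
qed

lemma mmax_props:
  assumes "m \<noteq> {#}"
  shows "mmax m \<in># m" "\<forall>k\<in>#m. k \<le> mmax m"
  using assms unfolding mmax_def by auto

theorem lemma3p15:
  fixes n p :: nat and B T :: "monomial set" and m :: monomial
  assumes "borel_ideal n B"
    and "is_Bgens n B T"
    and "m \<in> T"
    and "m \<noteq> {#}"
    and "mmax m = p"
    and "\<forall>m'\<in>T. mdeg m' \<le> mdeg m"
  shows "is_socle n B (m - {#p#}) p"
proof -
  define \<nu> where "\<nu> = m - {#p#}"
  have m_eq: "m = add_mset p \<nu>" using mmax_props(1)[OF assms(4)] assms(5) by (simp add: \<nu>_def)
  have low: "\<forall>k\<in>#\<nu>. k \<le> p" using mmax_props(2)[OF assms(4)] assms(5) m_eq by auto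
  have "m \<in> monomials n" and "m \<in> B"
    using assms(2,3) unfolding is_Bgens_def borel_gen_def by auto
  then have "\<nu> \<in> monomials n" using m_eq unfolding monomials_def by auto
  moreover have "var_ideal n p \<subseteq> colon n B \<nu>"
    using var_ideal_subset_colon assms(1) \<open>m \<in> B\<close> m_eq by blast
  moreover have "colon n B \<nu> \<subseteq> var_ideal n p"
    using colon_subset_var_ideal[OF assms(2)] assms(3,6) m_eq low unfolding mdeg_def by auto
  ultimately show ?thesis unfolding is_socle_def \<nu>_def by blast
qed

end
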